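(* Let $\mathbf{k}$ be an algebraically closed field of characteristic zero, $\mathcal{A}=\mathbf{k}[x_1,\ldots,x_n]$, $\mathcal{V}=\bigoplus_{i=1}^n\mathcal{A}\frac{\partial}{\partial x_i}$, $\mathcal{L}_+\subset\mathcal{V}$ the subalgebra of vector fields vanishing at the origin, and $\mathcal{D}$ the Weyl algebra. Let $\varphi:\mathcal{A}\# U(\mathcal{V})\to\mathcal{D}\otimes U(\mathcal{L}_+)$ be the algebra homomorphism which is the natural embedding $f\mapsto f\otimes1$ on $\mathcal{A}$ and satisfies $\varphi(x^k\frac{\partial}{\partial x_p})=x^k\frac{\partial}{\partial x_p}\otimes 1+\sum_{0<m\leq k}\binom{k}{m}x^{k-m}\otimes x^m\frac{\partial}{\partial x_p}$, and let $\psi:\mathcal{D}\otimes U(\mathcal{L}_+)\to\mathcal{A}\# U(\mathcal{V})$ be the algebra homomorphism with $\psi(x^r\partial^s\otimes 1)=x^r\#(\frac{\partial}{\partial x_1})^{s_1}\cdots(\frac{\partial}{\partial x_n})^{s_n}$ and $\psi(1\otimes x^m\frac{\partial}{\partial x_p})=\sum_{0\leq k\leq m}(-1)^{m-k}\binom{m}{k}x^{m-k}\# x^k\frac{\partial}{\partial x_p}$ for $m\neq 0$. Then $\psi\circ\varphi$ and $\varphi\circ\psi$ are the identity maps, i.e., $\varphi$ and $\psi$ are mutually inverse.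
   Context: Multi-index notation: $x^k=x_1^{k_1}\cdots x_n^{k_n}$, $\partial^s=(\partial/\partial x_1)^{s_1}\cdots(\partial/\partial x_n)^{s_n}$; $m\le k$ componentwise, $0<m\le k$ means additionally $m\ne0$; $\binom{k}{m}=\prod_i\binom{k_i}{m_i}$; $(-1)^{s}=(-1)^{s_1+\cdots+s_n}$. The smash product $\mathcal{A}\# U(\mathcal{V})$ is $\mathcal{A}\otimes U(\mathcal{V})$ with product $(f\# u)(g\# v)=\sum_i f\,u_i^{(1)}(g)\# u_i^{(2)}v$, $\Delta(u)=\sum_i u_i^{(1)}\otimes u_i^{(2)}$ the coproduct; in particular $(1\#\eta)(f\#1)=f\#\eta+\eta(f)\#1$. *)

theory Defs
  imports "HOL-Computational_Algebra.Polynomial" "HOL-Library.Poly_Mapping"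
begin

typedef 'g word = "UNIV :: 'g list set" by simp

setup_lifting type_definition_word

instantiation word :: (type) monoid_add
begin
lift_definition zero_word :: "'g word" is "[]" .
lift_definition plus_word :: "'g word \<Rightarrow> 'g word \<Rightarrow> 'g word" is "(@)" .
instance by standard (transfer, simp)+
end

text \<open>Free associative (noncommutative) k-algebra on generators 'g:
  finitely supported k-valued functions on words, with convolution product.\<close>
type_synonym ('k, 'g) freealg = "'g word \<Rightarrow>\<^sub>0 'k"

lift_definition letter :: "'g \<Rightarrow> 'g word" is "\<lambda>g. [g]" .

definition gen :: "'g \<Rightarrow> ('k::ring_1, 'g) freealg" where
  "gen g = Poly_Mapping.single (letter g) 1"

definition fsc :: "'k \<Rightarrow> ('k::ring_1, 'g) freealg" where
  "fsc c = Poly_Mapping.single 0 c"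

inductive_set ideal_gen :: "('k::ring_1, 'g) freealg set \<Rightarrow> ('k, 'g) freealg set"
  for R where
  base: "r \<in> R \<Longrightarrow> r \<in> ideal_gen R"
| zero: "0 \<in> ideal_gen R"
| add: "a \<in> ideal_gen R \<Longrightarrow> b \<in> ideal_gen R \<Longrightarrow> a + b \<in> ideal_gen R"
| mult: "a \<in> ideal_gen R \<Longrightarrow> x * a * y \<in> ideal_gen R"

text \<open>Algebra homomorphism between quotient algebras F1/I1 -> F2/I2, given on
  representatives.\<close>
definition quot_alg_hom ::
  "('k::ring_1, 'g) freealg set \<Rightarrow> ('k, 'h) freealg set \<Rightarrow>
   (('k, 'g) freealg \<Rightarrow> ('k, 'h) freealg) \<Rightarrow> bool" where
  "quot_alg_hom I J f \<longleftrightarrow>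
     (\<forall>a b. a - b \<in> I \<longrightarrow> f a - f b \<in> J) \<and>
     (\<forall>a b. f (a + b) - (f a + f b) \<in> J) \<and>
     (\<forall>c a. f (fsc c * a) - fsc c * f a \<in> J) \<and>
     (\<forall>a b. f (a * b) - f a * f b \<in> J) \<and>
     f 1 - 1 \<in> J"

type_synonym ('k, 'n) pol = "('n \<Rightarrow>\<^sub>0 nat) \<Rightarrow>\<^sub>0 'k"

definition xm :: "('n \<Rightarrow>\<^sub>0 nat) \<Rightarrow> ('k::comm_ring_1, 'n) pol" where
  "xm r = Poly_Mapping.single r 1"

definition psc :: "'k \<Rightarrow> ('k::comm_ring_1, 'n) pol" where
  "psc c = Poly_Mapping.single 0 c"

definition pdx :: "'n \<Rightarrow> ('k::comm_ring_1, 'n) pol \<Rightarrow> ('k, 'n) pol" where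
  "pdx i f = (\<Sum>r\<in>Poly_Mapping.keys f.
      Poly_Mapping.single (r - Poly_Mapping.single i 1)
        (of_nat (Poly_Mapping.lookup r i) * Poly_Mapping.lookup f r))"

text \<open>vector field sum_j eta_j d/dx_j, represented by its coefficient function\<close>
type_synonym ('k, 'n) vf = "'n \<Rightarrow> ('k, 'n) pol"

definition vact :: "('k::comm_ring_1, 'n::finite) vf \<Rightarrow> ('k, 'n) pol \<Rightarrow> ('k, 'n) pol" where
  "vact eta f = (\<Sum>j\<in>UNIV. eta j * pdx j f)"

definition vbr :: "('k::comm_ring_1, 'n::finite) vf \<Rightarrow> ('k, 'n) vf \<Rightarrow> ('k, 'n) vf" where
  "vbr xi eta = (\<lambda>i. vact xi (eta i) - vact eta (xi i))"

definition vsc :: "'k \<Rightarrow> ('k::comm_ring_1, 'n) vf \<Rightarrow> ('k, 'n) vf" where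
  "vsc c eta = (\<lambda>i. psc c * eta i)"

definition Lplus :: "('k::comm_ring_1, 'n) vf set" where
  "Lplus = {eta. \<forall>j. Poly_Mapping.lookup (eta j) 0 = 0}"

definition xd :: "('n \<Rightarrow>\<^sub>0 nat) \<Rightarrow> 'n \<Rightarrow> ('k::comm_ring_1, 'n) vf" where
  "xd k p = (\<lambda>j. if j = p then xm k else 0)"

definition dvec :: "'n \<Rightarrow> ('k::comm_ring_1, 'n) vf" where
  "dvec p = xd 0 p"

definition mle :: "('n \<Rightarrow>\<^sub>0 nat) \<Rightarrow> ('n \<Rightarrow>\<^sub>0 nat) \<Rightarrow> bool" where
  "mle m k \<longleftrightarrow> (\<forall>i. Poly_Mapping.lookup m i \<le> Poly_Mapping.lookup k i)"

definition mbinom :: "('n::finite \<Rightarrow>\<^sub>0 nat) \<Rightarrow> ('n \<Rightarrow>\<^sub>0 nat) \<Rightarrow> nat" where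
  "mbinom k m = (\<Prod>i\<in>UNIV. Poly_Mapping.lookup k i choose Poly_Mapping.lookup m i)"

definition msize :: "('n::finite \<Rightarrow>\<^sub>0 nat) \<Rightarrow> nat" where
  "msize m = (\<Sum>i\<in>UNIV. Poly_Mapping.lookup m i)"

definition oprod :: "('n::{finite,linorder} \<Rightarrow> 'a::monoid_mult) \<Rightarrow> ('n \<Rightarrow>\<^sub>0 nat) \<Rightarrow> 'a" where
  "oprod a s = foldr (\<lambda>i acc. a i ^ Poly_Mapping.lookup s i * acc) (sorted_list_of_set UNIV) 1"

section \<open>The smash product A # U(V), by generators and relations\<close>

datatype ('a, 'v) sgen = GA 'a | GV 'v

definition smash_rel :: "('k::comm_ring_1, (('k, 'n::finite) pol, ('k, 'n) vf) sgen) freealg set" where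
  "smash_rel =
     {gen (GA (f + g)) - gen (GA f) - gen (GA g) | f g. True} \<union>
     {gen (GA (psc c * f)) - fsc c * gen (GA f) | c f. True} \<union>
     {gen (GA f) * gen (GA g) - gen (GA (f * g)) | f g. True} \<union>
     {gen (GA 1) - 1} \<union>
     {gen (GV (\<lambda>i. xi i + eta i)) - gen (GV xi) - gen (GV eta) | xi eta. True} \<union>
     {gen (GV (vsc c eta)) - fsc c * gen (GV eta) | c eta. True} \<union>
     {gen (GV xi) * gen (GV eta) - gen (GV eta) * gen (GV xi) - gen (GV (vbr xi eta)) | xi eta. True} \<union>
     {gen (GV eta) * gen (GA f) - gen (GA f) * gen (GV eta) - gen (GA (vact eta f)) | eta f. True}"

definition smash_ideal :: "('k::comm_ring_1, (('k, 'n::finite) pol, ('k, 'n) vf) sgen) freealg set" where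
  "smash_ideal = ideal_gen smash_rel"

section \<open>D \<otimes> U(L_+), by generators and relations\<close>

datatype ('n, 'v) tgen = GX 'n | GD 'n | GL 'v

definition tens_rel :: "('k::comm_ring_1, ('n::finite, ('k, 'n) vf) tgen) freealg set" where
  "tens_rel =
     \<comment> \<open>Weyl algebra\<close>
     {gen (GX i) * gen (GX j) - gen (GX j) * gen (GX i) | i j. True} \<union>
     {gen (GD i) * gen (GD j) - gen (GD j) * gen (GD i) | i j. True} \<union>
     {gen (GD i) * gen (GX j) - gen (GX j) * gen (GD i) - (if i = j then 1 else 0) | i j. True} \<union>
     \<comment> \<open>universal enveloping algebra of L_+ (generators outside L_+ are killed)\<close>
     {gen (GL eta) | eta. eta \<notin> Lplus} \<union>
     {gen (GL (\<lambda>i. xi i + eta i)) - gen (GL xi) - gen (GL eta) | xi eta. xi \<in> Lplus \<and> eta \<in> Lplus} \<union>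
     {gen (GL (vsc c eta)) - fsc c * gen (GL eta) | c eta. eta \<in> Lplus} \<union>
     {gen (GL xi) * gen (GL eta) - gen (GL eta) * gen (GL xi) - gen (GL (vbr xi eta)) | xi eta.
        xi \<in> Lplus \<and> eta \<in> Lplus} \<union>
     \<comment> \<open>tensor product: the two factors commute\<close>
     {gen (GL eta) * gen (GX i) - gen (GX i) * gen (GL eta) | eta i. True} \<union>
     {gen (GL eta) * gen (GD i) - gen (GD i) * gen (GL eta) | eta i. True}"

definition tens_ideal :: "('k::comm_ring_1, ('n::finite, ('k, 'n) vf) tgen) freealg set" where
  "tens_ideal = ideal_gen tens_rel"

definition Dxd :: "('n::{finite,linorder} \<Rightarrow>\<^sub>0 nat) \<Rightarrow> ('n \<Rightarrow>\<^sub>0 nat) \<Rightarrow> ('k::comm_ring_1, ('n, ('k, 'n) vf) tgen) freealg" where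
  "Dxd r s = oprod (\<lambda>i. gen (GX i)) r * oprod (\<lambda>i. gen (GD i)) s"

definition Aemb :: "('k::comm_ring_1, 'n::{finite,linorder}) pol \<Rightarrow> ('k, ('n, ('k, 'n) vf) tgen) freealg" where
  "Aemb f = (\<Sum>r\<in>Poly_Mapping.keys f. fsc (Poly_Mapping.lookup f r) * Dxd r 0)"

end

theory Submission
  imports Defs "HOL-Library.FuncSet" "HOL-Library.Function_Algebras"
begin

(*
  Both composites are endomorphisms of finitely presented algebras, so it suffices that each
  fixes every generator modulo the relations.  For polynomials and the x_i this is immediate
  from the defining formulas.  For the remaining generators put e_0 = d/dx_p (x) 1 and
  e_l = 1 (x) x^l d/dx_p for l <> 0.  Then

    phi (x^k d/dx_p) = sum_{l <= k} C(k,l) x^(k-l) e_l,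
    psi (e_l)        = sum_{j <= l} (-1)^|l-j| C(l,j) x^(l-j) # x^j d/dx_p,

  the powers of x multiply additively on both sides, and the two coefficient matrices are
  inverse to each other by multi-index binomial inversion.  Linearity in the vector field
  extends this from the monomial fields x^k d/dx_p to all of V and of L_+.  Only integer
  identities enter.
*)

section \<open>Congruence modulo a set of relations\<close>

definition cong_mod :: "('k::ring_1, 'g) freealg \<Rightarrow> ('k, 'g) freealg set \<Rightarrow> ('k, 'g) freealg \<Rightarrow> bool"
    ("(_/ \<approx>\<^bsub>_\<^esub> _)" [51, 0, 51] 50) where
  "a \<approx>\<^bsub>R\<^esub> b \<longleftrightarrow> a - b \<in> ideal_gen R"

lemma ideal_gen_lmult: "a \<in> ideal_gen R \<Longrightarrow> x * a \<in> ideal_gen R"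
  using ideal_gen.mult[of a R x 1] by simp

lemma ideal_gen_rmult: "a \<in> ideal_gen R \<Longrightarrow> a * y \<in> ideal_gen R"
  using ideal_gen.mult[of a R 1 y] by simp

lemma ideal_gen_uminus: "a \<in> ideal_gen R \<Longrightarrow> - a \<in> ideal_gen R"
  using ideal_gen_lmult[of a R "- 1"] by simp

lemma cong_mod_refl [simp]: "a \<approx>\<^bsub>R\<^esub> a"
  by (simp add: cong_mod_def ideal_gen.zero)

lemma cong_mod_eq: "a = b \<Longrightarrow> a \<approx>\<^bsub>R\<^esub> b"
  by simp

lemma cong_mod_rel: "a - b \<in> R \<Longrightarrow> a \<approx>\<^bsub>R\<^esub> b"
  by (simp add: cong_mod_def ideal_gen.base)

lemma cong_mod_sym: "a \<approx>\<^bsub>R\<^esub> b \<Longrightarrow> b \<approx>\<^bsub>R\<^esub> a"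
  unfolding cong_mod_def by (drule ideal_gen_uminus) simp

lemma cong_mod_trans [trans]: "a \<approx>\<^bsub>R\<^esub> b \<Longrightarrow> b \<approx>\<^bsub>R\<^esub> c \<Longrightarrow> a \<approx>\<^bsub>R\<^esub> c"
  unfolding cong_mod_def by (drule (1) ideal_gen.add) simp

lemma cong_mod_add: "a \<approx>\<^bsub>R\<^esub> a' \<Longrightarrow> b \<approx>\<^bsub>R\<^esub> b' \<Longrightarrow> a + b \<approx>\<^bsub>R\<^esub> a' + b'"
  unfolding cong_mod_def by (drule (1) ideal_gen.add) (simp add: algebra_simps)

lemma cong_mod_mult:
  assumes "a \<approx>\<^bsub>R\<^esub> a'" and "b \<approx>\<^bsub>R\<^esub> b'"
  shows "a * b \<approx>\<^bsub>R\<^esub> a' * b'"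
proof -
  have "(a - a') * b + a' * (b - b') \<in> ideal_gen R"
    using assms unfolding cong_mod_def by (intro ideal_gen.add ideal_gen_lmult ideal_gen_rmult)
  then show ?thesis
    unfolding cong_mod_def by (simp add: algebra_simps)
qed

lemma cong_mod_lmult: "b \<approx>\<^bsub>R\<^esub> b' \<Longrightarrow> a * b \<approx>\<^bsub>R\<^esub> a * b'"
  by (rule cong_mod_mult) simp_all

lemma cong_mod_rmult: "a \<approx>\<^bsub>R\<^esub> a' \<Longrightarrow> a * b \<approx>\<^bsub>R\<^esub> a' * b"
  by (rule cong_mod_mult) simp_all

lemma cong_mod_sum: "(\<And>x. x \<in> A \<Longrightarrow> f x \<approx>\<^bsub>R\<^esub> g x) \<Longrightarrow> sum f A \<approx>\<^bsub>R\<^esub> sum g A"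
  by (induction A rule: infinite_finite_induct) (simp_all add: cong_mod_add)

lemma cong_mod_zero_if_double: "a \<approx>\<^bsub>R\<^esub> a + a \<Longrightarrow> a \<approx>\<^bsub>R\<^esub> 0"
  unfolding cong_mod_def by (drule ideal_gen_uminus) simp

context
  fixes F :: "('k::ring_1, 'g) freealg \<Rightarrow> ('k, 'h) freealg" and I S
  assumes hom: "quot_alg_hom I (ideal_gen S) F"
begin

lemma quot_alg_hom_add: "F (a + b) \<approx>\<^bsub>S\<^esub> F a + F b"
  using hom by (simp add: quot_alg_hom_def cong_mod_def)

lemma quot_alg_hom_mult: "F (a * b) \<approx>\<^bsub>S\<^esub> F a * F b"
  using hom by (simp add: quot_alg_hom_def cong_mod_def)

lemma quot_alg_hom_scale: "F (fsc c * a) \<approx>\<^bsub>S\<^esub> fsc c * F a"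
  using hom by (simp add: quot_alg_hom_def cong_mod_def)

lemma quot_alg_hom_one: "F 1 \<approx>\<^bsub>S\<^esub> 1"
  using hom by (simp add: quot_alg_hom_def cong_mod_def)

lemma quot_alg_hom_zero: "F 0 \<approx>\<^bsub>S\<^esub> 0"
  using quot_alg_hom_add[of 0 0] by (intro cong_mod_zero_if_double) simp

lemma quot_alg_hom_sum: "F (sum f A) \<approx>\<^bsub>S\<^esub> (\<Sum>x\<in>A. F (f x))"
proof (induction A rule: infinite_finite_induct)
  case (insert x A)
  have "F (sum f (insert x A)) \<approx>\<^bsub>S\<^esub> F (f x) + F (sum f A)"
    using insert quot_alg_hom_add by simp
  also have "\<dots> \<approx>\<^bsub>S\<^esub> F (f x) + (\<Sum>x\<in>A. F (f x))"
    by (rule cong_mod_add[OF cong_mod_refl insert.IH])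
  finally show ?case
    using insert by simp
qed (simp_all add: quot_alg_hom_zero)

lemma quot_alg_hom_scale_mult: "F (fsc c * a * b) \<approx>\<^bsub>S\<^esub> fsc c * F a * F b"
proof -
  have "F (fsc c * (a * b)) \<approx>\<^bsub>S\<^esub> fsc c * F (a * b)"
    by (rule quot_alg_hom_scale)
  also have "\<dots> \<approx>\<^bsub>S\<^esub> fsc c * (F a * F b)"
    by (rule cong_mod_lmult[OF quot_alg_hom_mult])
  finally show ?thesis
    by (simp add: mult.assoc)
qed

end

lemma quot_alg_hom_cong:
  "quot_alg_hom (ideal_gen R) (ideal_gen S) F \<Longrightarrow> a \<approx>\<^bsub>R\<^esub> b \<Longrightarrow> F a \<approx>\<^bsub>S\<^esub> F b"
  by (simp add: quot_alg_hom_def cong_mod_def)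

lemma quot_alg_hom_comp:
  assumes F: "quot_alg_hom (ideal_gen R) (ideal_gen S) F"
    and G: "quot_alg_hom (ideal_gen S) (ideal_gen T) G"
  shows "quot_alg_hom (ideal_gen R) (ideal_gen T) (\<lambda>x. G (F x))"
proof -
  have "G (F a) \<approx>\<^bsub>T\<^esub> G (F b)" if "a \<approx>\<^bsub>R\<^esub> b" for a b
    using quot_alg_hom_cong[OF G quot_alg_hom_cong[OF F that]] .
  moreover have "G (F (a + b)) \<approx>\<^bsub>T\<^esub> G (F a) + G (F b)" for a b
    using cong_mod_trans[OF quot_alg_hom_cong[OF G quot_alg_hom_add[OF F]] quot_alg_hom_add[OF G]] .
  moreover have "G (F (a * b)) \<approx>\<^bsub>T\<^esub> G (F a) * G (F b)" for a b
    using cong_mod_trans[OF quot_alg_hom_cong[OF G quot_alg_hom_mult[OF F]] quot_alg_hom_mult[OF G]] .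
  moreover have "G (F (fsc c * a)) \<approx>\<^bsub>T\<^esub> fsc c * G (F a)" for c a
    using cong_mod_trans[OF quot_alg_hom_cong[OF G quot_alg_hom_scale[OF F]] quot_alg_hom_scale[OF G]] .
  moreover have "G (F 1) \<approx>\<^bsub>T\<^esub> 1"
    using cong_mod_trans[OF quot_alg_hom_cong[OF G quot_alg_hom_one[OF F]] quot_alg_hom_one[OF G]] .
  ultimately show ?thesis
    unfolding quot_alg_hom_def cong_mod_def by blast
qed

lemma quot_alg_hom_fixes_if_cong_zero:
  assumes F: "quot_alg_hom (ideal_gen S) (ideal_gen S) F" and a: "a \<approx>\<^bsub>S\<^esub> 0"
  shows "F a \<approx>\<^bsub>S\<^esub> a"
proof -
  have "F a \<approx>\<^bsub>S\<^esub> F 0"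
    by (rule quot_alg_hom_cong[OF F a])
  also have "\<dots> \<approx>\<^bsub>S\<^esub> 0"
    by (rule quot_alg_hom_zero[OF F])
  also have "\<dots> \<approx>\<^bsub>S\<^esub> a"
    by (rule cong_mod_sym[OF a])
  finally show ?thesis .
qed

lemma quot_alg_hom_fixes_sum:
  assumes F: "quot_alg_hom (ideal_gen S) (ideal_gen S) F"
    and a: "a \<approx>\<^bsub>S\<^esub> (\<Sum>x\<in>A. fsc (c x) * g x)"
    and fix_g: "\<And>x. x \<in> A \<Longrightarrow> F (g x) \<approx>\<^bsub>S\<^esub> g x"
  shows "F a \<approx>\<^bsub>S\<^esub> a"
proof -
  have "F a \<approx>\<^bsub>S\<^esub> F (\<Sum>x\<in>A. fsc (c x) * g x)"
    by (rule quot_alg_hom_cong[OF F a])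
  also have "\<dots> \<approx>\<^bsub>S\<^esub> (\<Sum>x\<in>A. fsc (c x) * F (g x))"
    by (rule cong_mod_trans[OF quot_alg_hom_sum[OF F] cong_mod_sum[OF quot_alg_hom_scale[OF F]]])
  also have "\<dots> \<approx>\<^bsub>S\<^esub> (\<Sum>x\<in>A. fsc (c x) * g x)"
    by (intro cong_mod_sum cong_mod_lmult fix_g)
  also have "\<dots> \<approx>\<^bsub>S\<^esub> a"
    by (rule cong_mod_sym[OF a])
  finally show ?thesis .
qed

lemma fsc_1 [simp]: "fsc 1 = 1"
  by (simp add: fsc_def)

lemma fsc_0 [simp]: "fsc 0 = 0"
  by (simp add: fsc_def)

lemma fsc_mult: "fsc a * fsc b = fsc (a * b)"
  by (simp add: fsc_def mult_single)

lemma fsc_sum: "fsc (sum f A) = (\<Sum>x\<in>A. fsc (f x))"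
  by (induction A rule: infinite_finite_induct) (simp_all add: fsc_def single_add)

lemma fsc_single: "fsc c * Poly_Mapping.single w 1 = Poly_Mapping.single w c"
  by (simp add: fsc_def mult_single)

lemma poly_mapping_sum_single:
  "(\<Sum>r\<in>Poly_Mapping.keys a. Poly_Mapping.single r (Poly_Mapping.lookup a r)) = a"
proof -
  have "finite I \<Longrightarrow> Poly_Mapping.lookup (\<Sum>r\<in>I. Poly_Mapping.single r (Poly_Mapping.lookup a r)) j =
      (if j \<in> I then Poly_Mapping.lookup a j else 0)" for I j
    by (induction I rule: finite_induct) (auto simp: lookup_single lookup_add when_def)
  then show ?thesis
    by (intro poly_mapping_eqI) (simp add: in_keys_iff)
qed

lemma fsc_commute: "fsc c * x = x * (fsc c :: ('k::comm_ring_1, 'g) freealg)"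
proof -
  have "fsc c * x = (\<Sum>r\<in>Poly_Mapping.keys x. fsc c * Poly_Mapping.single r (Poly_Mapping.lookup x r))"
    by (subst (1) poly_mapping_sum_single[symmetric, of x]) (simp add: sum_distrib_left)
  also have "\<dots> = (\<Sum>r\<in>Poly_Mapping.keys x. Poly_Mapping.single r (Poly_Mapping.lookup x r) * fsc c)"
    by (intro sum.cong refl) (simp add: fsc_def mult_single mult.commute)
  also have "\<dots> = x * fsc c"
    by (subst (3) poly_mapping_sum_single[symmetric, of x]) (simp add: sum_distrib_right)
  finally show ?thesis .
qed

lemma fsc_mult_reassoc:
  "fsc c * X * (fsc d * Y * Z) = fsc (c * d) * (X * Y) * (Z :: ('k::comm_ring_1, 'g) freealg)"
  by (simp add: mult.assoc fsc_commute[of d] flip: fsc_mult)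

lemma single_word_eq_prod_gen: "Poly_Mapping.single (Abs_word l) (1::'k::ring_1) = prod_list (map gen l)"
proof (induction l)
  case Nil
  show ?case
    by (simp add: zero_word_def[symmetric])
next
  case (Cons g l)
  have "letter g + Abs_word l = Abs_word (g # l)"
    by (simp add: letter_def plus_word_def Abs_word_inverse)
  then have "Poly_Mapping.single (Abs_word (g # l)) (1::'k) = gen g * Poly_Mapping.single (Abs_word l) 1"
    by (simp add: gen_def mult_single)
  then show ?case
    using Cons by simp
qed

lemma freealg_expand:
  "a = (\<Sum>w\<in>Poly_Mapping.keys a. fsc (Poly_Mapping.lookup a w) * prod_list (map gen (Rep_word w)))"
  by (simp add: single_word_eq_prod_gen[symmetric] Rep_word_inverse fsc_single poly_mapping_sum_single)

lemma quot_alg_hom_eq_id_if_fixes_gen: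
  assumes F: "quot_alg_hom (ideal_gen R) (ideal_gen R) F"
    and fix_gen: "\<And>g. F (gen g) \<approx>\<^bsub>R\<^esub> gen g"
  shows "F a \<approx>\<^bsub>R\<^esub> a"
proof (rule quot_alg_hom_fixes_sum[OF F cong_mod_eq[OF freealg_expand]])
  have "F (prod_list (map gen l)) \<approx>\<^bsub>R\<^esub> prod_list (map gen l)" for l
  proof (induction l)
    case Nil
    show ?case
      using quot_alg_hom_one[OF F] by simp
  next
    case (Cons g l)
    have "F (prod_list (map gen (g # l))) \<approx>\<^bsub>R\<^esub> F (gen g) * F (prod_list (map gen l))"
      using quot_alg_hom_mult[OF F] by simp
    also have "\<dots> \<approx>\<^bsub>R\<^esub> prod_list (map gen (g # l))"
      using cong_mod_mult[OF fix_gen Cons] by simp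
    finally show ?case .
  qed
  then show "F (prod_list (map gen (Rep_word w))) \<approx>\<^bsub>R\<^esub> prod_list (map gen (Rep_word w))" for w .
qed

section \<open>Multi-indices and binomial inversion\<close>

lemma mle_refl: "mle m m"
  by (simp add: mle_def)

lemma mle_trans: "mle a b \<Longrightarrow> mle b c \<Longrightarrow> mle a c"
  unfolding mle_def using le_trans by blast

lemma mle_0: "mle 0 m"
  by (simp add: mle_def)

lemma mle_0_iff: "mle m 0 \<longleftrightarrow> m = 0"
  by (auto simp: mle_def intro: poly_mapping_eqI)

lemma mle_diff_add_diff: "mle j m \<Longrightarrow> mle m k \<Longrightarrow> (k - m) + (m - j) = (k - j :: 'n \<Rightarrow>\<^sub>0 nat)"
  by (rule poly_mapping_eqI) (auto simp: mle_def lookup_add lookup_minus intro: le_trans)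

lemma mbinom_0 [simp]: "mbinom k 0 = 1"
  by (simp add: mbinom_def)

lemma msize_0 [simp]: "msize 0 = 0"
  by (simp add: msize_def)

lemma sum_box_prod:
  fixes f :: "'n::finite \<Rightarrow> nat \<Rightarrow> 'a::comm_semiring_1"
  assumes "\<And>i. finite (B i)"
  shows "(\<Sum>m | \<forall>i. Poly_Mapping.lookup m i \<in> B i. \<Prod>i\<in>UNIV. f i (Poly_Mapping.lookup m i))
       = (\<Prod>i\<in>UNIV. \<Sum>t\<in>B i. f i t)"
proof -
  have "bij_betw Poly_Mapping.lookup {m. \<forall>i. Poly_Mapping.lookup m i \<in> B i} (PiE UNIV B)"
  proof (rule bij_betwI')
    show "g \<in> PiE UNIV B \<Longrightarrow> \<exists>m\<in>{m. \<forall>i. Poly_Mapping.lookup m i \<in> B i}. g = Poly_Mapping.lookup m" for g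
      by (intro bexI[of _ "Abs_poly_mapping g"]) (auto simp: PiE_def Pi_def)
  qed (auto simp: poly_mapping_eqI PiE_def extensional_def)
  then have "(\<Sum>m | \<forall>i. Poly_Mapping.lookup m i \<in> B i. \<Prod>i\<in>UNIV. f i (Poly_Mapping.lookup m i))
      = (\<Sum>g\<in>PiE UNIV B. \<Prod>i\<in>UNIV. f i (g i))"
    by (rule sum.reindex_bij_betw)
  also have "\<dots> = (\<Prod>i\<in>UNIV. \<Sum>t\<in>B i. f i t)"
    by (rule prod_sum_PiE[symmetric]) (simp_all add: assms)
  finally show ?thesis .
qed

lemma mle_interval_eq_box:
  "{j. mle l j \<and> mle j m} = {j. \<forall>i. Poly_Mapping.lookup j i \<in> {Poly_Mapping.lookup l i..Poly_Mapping.lookup m i}}"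
  by (auto simp: mle_def)

lemma finite_mle_interval: "finite {j :: 'n::finite \<Rightarrow>\<^sub>0 nat. mle l j \<and> mle j m}"
proof -
  have "finite (PiE UNIV (\<lambda>i. {Poly_Mapping.lookup l i..Poly_Mapping.lookup m i}))"
    by (simp add: finite_PiE)
  moreover have "Poly_Mapping.lookup ` {j. mle l j \<and> mle j m}
      \<subseteq> PiE UNIV (\<lambda>i. {Poly_Mapping.lookup l i..Poly_Mapping.lookup m i})"
    by (auto simp: mle_def PiE_def extensional_def)
  ultimately show ?thesis
    by (metis (no_types, lifting) finite_imageD finite_subset inj_onI lookup_inject)
qed

lemma finite_mle: "finite {j :: 'n::finite \<Rightarrow>\<^sub>0 nat. mle j m}"
  using finite_mle_interval[of 0 m] by (simp add: mle_0)

lemma sum_mle_swap: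
  fixes h :: "('n::finite \<Rightarrow>\<^sub>0 nat) \<Rightarrow> ('n \<Rightarrow>\<^sub>0 nat) \<Rightarrow> 'a::comm_monoid_add"
  shows "(\<Sum>l | mle l k. \<Sum>j | mle j l. h l j) = (\<Sum>j | mle j k. \<Sum>l | mle j l \<and> mle l k. h l j)"
proof -
  let ?K = "{l. mle l k}"
  have "(\<Sum>l\<in>?K. \<Sum>j | mle j l. h l j) = (\<Sum>l\<in>?K. \<Sum>j | j \<in> ?K \<and> mle j l. h l j)"
    by (intro sum.cong refl) (auto intro: mle_trans)
  also have "\<dots> = (\<Sum>j\<in>?K. \<Sum>l | l \<in> ?K \<and> mle j l. h l j)"
    by (rule sum.swap_restrict[OF finite_mle finite_mle])
  finally show ?thesis
    by (simp add: conj_commute)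
qed

lemma choose_inversion:
  assumes "l \<le> m"
  shows "(\<Sum>t=l..m. of_nat (m choose t) * ((-1) ^ (t - l) * of_nat (t choose l)))
       = (if l = m then 1 else (0::'a::comm_ring_1))"
proof -
  have "(\<Sum>t=l..m. of_nat (m choose t) * ((-1) ^ (t - l) * of_nat (t choose l)))
      = (\<Sum>u\<le>m - l. of_nat (m choose (u + l)) * ((-1) ^ u * of_nat ((u + l) choose l)) :: 'a)"
    using assms by (intro sum.reindex_bij_witness[of _ "\<lambda>u. u + l" "\<lambda>t. t - l"]) auto
  also have "\<dots> = of_nat (m choose l) * (\<Sum>u\<le>m - l. (-1) ^ u * of_nat ((m - l) choose u))"
    unfolding sum_distrib_left
  proof (intro sum.cong refl)
    fix u
    assume "u \<in> {..m - l}"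
    then have "(m choose (u + l)) * ((u + l) choose l) = (m choose l) * ((m - l) choose u)"
      using choose_mult[of l "u + l" m] assms by simp
    then show "of_nat (m choose (u + l)) * ((-1) ^ u * of_nat ((u + l) choose l))
        = (of_nat (m choose l) * ((-1) ^ u * of_nat ((m - l) choose u)) :: 'a)"
      by (metis (no_types) mult.left_commute of_nat_mult)
  qed
  also have "\<dots> = (if l = m then 1 else 0)"
    using assms choose_alternating_sum[of "m - l", where 'a='a] by auto
  finally show ?thesis .
qed

lemma choose_inversion':
  assumes "l \<le> m"
  shows "(\<Sum>t=l..m. (-1) ^ (m - t) * of_nat (m choose t) * of_nat (t choose l))
       = (if l = m then 1 else (0::'a::comm_ring_1))"
proof -
  have sign: "(-1) ^ (m - t) = ((-1) ^ (m - l) * (-1) ^ (t - l) :: 'a)" if "t \<in> {l..m}" for t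
  proof -
    have "m - l = (m - t) + (t - l)"
      using that by auto
    then show ?thesis
      by (simp only: power_add mult.assoc minus_one_mult_self mult_1_right)
  qed
  have "(\<Sum>t=l..m. (-1) ^ (m - t) * of_nat (m choose t) * of_nat (t choose l))
      = (-1) ^ (m - l) * (\<Sum>t=l..m. of_nat (m choose t) * ((-1) ^ (t - l) * of_nat (t choose l)) :: 'a)"
    unfolding sum_distrib_left
  proof (intro sum.cong refl)
    fix t
    assume t: "t \<in> {l..m}"
    show "(-1) ^ (m - t) * of_nat (m choose t) * of_nat (t choose l)
        = ((-1) ^ (m - l) * (of_nat (m choose t) * ((-1) ^ (t - l) * of_nat (t choose l))) :: 'a)"
      unfolding sign[OF t] by (simp only: mult_ac)
  qed
  then show ?thesis
    using choose_inversion[OF assms, where 'a='a] by simp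
qed

lemma mbinom_of_nat: "(of_nat (mbinom m j) :: 'a::comm_semiring_1)
    = (\<Prod>i\<in>UNIV. of_nat (Poly_Mapping.lookup m i choose Poly_Mapping.lookup j i))"
  by (simp add: mbinom_def)

lemma minus_one_power_msize: "(-1::'a::comm_ring_1) ^ msize (m - j)
    = (\<Prod>i\<in>UNIV. (-1) ^ (Poly_Mapping.lookup m i - Poly_Mapping.lookup j i))"
  by (simp add: msize_def lookup_minus power_sum)

lemma prod_if_lookup_eq:
  "(\<Prod>i\<in>UNIV. if Poly_Mapping.lookup l i = Poly_Mapping.lookup m i then 1 else (0::'a::comm_semiring_1))
    = (if l = (m :: 'n::finite \<Rightarrow>\<^sub>0 nat) then 1 else 0)"
proof (cases "l = m")
  case False
  then obtain i where "Poly_Mapping.lookup l i \<noteq> Poly_Mapping.lookup m i"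
    using poly_mapping_eqI by metis
  then have "(\<Prod>i\<in>UNIV. if Poly_Mapping.lookup l i = Poly_Mapping.lookup m i then 1 else (0::'a)) = 0"
    by (intro prod_zero) auto
  with False show ?thesis
    by simp
qed simp

lemma mbinom_inversion:
  assumes "mle j k"
  shows "(\<Sum>m | mle j m \<and> mle m k. of_nat (mbinom k m) * ((-1) ^ msize (m - j) * of_nat (mbinom m j)))
       = (if j = (k :: 'n::finite \<Rightarrow>\<^sub>0 nat) then 1 else (0::'a::comm_ring_1))"
proof -
  let ?f = "\<lambda>i t. of_nat (Poly_Mapping.lookup k i choose t)
      * ((-1) ^ (t - Poly_Mapping.lookup j i) * of_nat (t choose Poly_Mapping.lookup j i)) :: 'a"
  have "(\<Sum>m | mle j m \<and> mle m k. of_nat (mbinom k m) * ((-1) ^ msize (m - j) * of_nat (mbinom m j)))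
      = (\<Sum>m | \<forall>i. Poly_Mapping.lookup m i \<in> {Poly_Mapping.lookup j i..Poly_Mapping.lookup k i}.
          \<Prod>i\<in>UNIV. ?f i (Poly_Mapping.lookup m i))"
    unfolding mle_interval_eq_box minus_one_power_msize mbinom_of_nat
    by (intro sum.cong refl) (simp add: prod.distrib)
  also have "\<dots> = (\<Prod>i\<in>UNIV. \<Sum>t = Poly_Mapping.lookup j i..Poly_Mapping.lookup k i. ?f i t)"
    by (rule sum_box_prod) simp
  also have "\<dots> = (\<Prod>i\<in>UNIV. if Poly_Mapping.lookup j i = Poly_Mapping.lookup k i then 1 else 0)"
    using assms by (intro prod.cong refl choose_inversion) (simp add: mle_def)
  finally show ?thesis
    by (simp add: prod_if_lookup_eq)
qed

lemma mbinom_inversion':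
  assumes "mle l m"
  shows "(\<Sum>j | mle l j \<and> mle j m. (-1) ^ msize (m - j) * of_nat (mbinom m j) * of_nat (mbinom j l))
       = (if l = (m :: 'n::finite \<Rightarrow>\<^sub>0 nat) then 1 else (0::'a::comm_ring_1))"
proof -
  let ?f = "\<lambda>i t. (-1) ^ (Poly_Mapping.lookup m i - t) * of_nat (Poly_Mapping.lookup m i choose t)
      * of_nat (t choose Poly_Mapping.lookup l i) :: 'a"
  have "(\<Sum>j | mle l j \<and> mle j m. (-1) ^ msize (m - j) * of_nat (mbinom m j) * of_nat (mbinom j l))
      = (\<Sum>j | \<forall>i. Poly_Mapping.lookup j i \<in> {Poly_Mapping.lookup l i..Poly_Mapping.lookup m i}.
          \<Prod>i\<in>UNIV. ?f i (Poly_Mapping.lookup j i))"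
    unfolding mle_interval_eq_box minus_one_power_msize mbinom_of_nat
    by (intro sum.cong refl) (simp add: prod.distrib)
  also have "\<dots> = (\<Prod>i\<in>UNIV. \<Sum>t = Poly_Mapping.lookup l i..Poly_Mapping.lookup m i. ?f i t)"
    by (rule sum_box_prod) simp
  also have "\<dots> = (\<Prod>i\<in>UNIV. if Poly_Mapping.lookup l i = Poly_Mapping.lookup m i then 1 else 0)"
    using assms by (intro prod.cong refl choose_inversion') (simp add: mle_def)
  finally show ?thesis
    by (simp add: prod_if_lookup_eq)
qed

lemma oprod_0 [simp]: "oprod a 0 = 1"
proof -
  have "foldr (\<lambda>i acc. a i ^ Poly_Mapping.lookup 0 i * acc) xs 1 = 1" for xs
    by (induction xs) simp_all
  then show ?thesis
    by (simp add: oprod_def)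
qed

lemma oprod_single: "oprod a (Poly_Mapping.single i 1) = a i"
proof -
  have "distinct xs \<Longrightarrow> foldr (\<lambda>j acc. a j ^ Poly_Mapping.lookup (Poly_Mapping.single i 1) j * acc) xs 1
      = (if i \<in> set xs then a i else 1)" for xs
    by (induction xs) (auto simp: lookup_single when_def)
  then show ?thesis
    by (simp add: oprod_def)
qed

lemma cong_mod_commute_mult:
  assumes "c * x \<approx>\<^bsub>R\<^esub> x * c" and "c * y \<approx>\<^bsub>R\<^esub> y * c"
  shows "c * (x * y) \<approx>\<^bsub>R\<^esub> (x * y) * c"
proof -
  have "c * (x * y) \<approx>\<^bsub>R\<^esub> (x * c) * y"
    using cong_mod_rmult[OF assms(1)] by (simp add: mult.assoc)
  also have "\<dots> \<approx>\<^bsub>R\<^esub> x * (y * c)"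
    using cong_mod_lmult[OF assms(2), of x] by (simp add: mult.assoc)
  finally show ?thesis
    by (simp add: mult.assoc)
qed

lemma cong_mod_commute_power: "c * x \<approx>\<^bsub>R\<^esub> x * c \<Longrightarrow> c * x ^ n \<approx>\<^bsub>R\<^esub> x ^ n * c"
  by (induction n) (simp_all add: cong_mod_commute_mult)

lemma oprod_add:
  assumes commute: "\<And>i j. a i * a j \<approx>\<^bsub>R\<^esub> a j * a i"
  shows "oprod a r * oprod a s \<approx>\<^bsub>R\<^esub> oprod a (r + s)"
proof -
  define P where "P t xs = foldr (\<lambda>j acc. a j ^ Poly_Mapping.lookup t j * acc) xs 1" for t xs
  have P_commute: "c * P t xs \<approx>\<^bsub>R\<^esub> P t xs * c" if "\<And>j. c * a j \<approx>\<^bsub>R\<^esub> a j * c" for c t xs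
    unfolding P_def by (induction xs) (simp_all add: cong_mod_commute_mult cong_mod_commute_power that)
  have "P r xs * P s xs \<approx>\<^bsub>R\<^esub> P (r + s) xs" for xs
  proof (induction xs)
    case (Cons x xs)
    let ?r = "a x ^ Poly_Mapping.lookup r x" and ?s = "a x ^ Poly_Mapping.lookup s x"
    have "?s * a j \<approx>\<^bsub>R\<^esub> a j * ?s" for j
      by (rule cong_mod_sym[OF cong_mod_commute_power[OF commute]])
    then have "P r xs * ?s \<approx>\<^bsub>R\<^esub> ?s * P r xs"
      by (rule cong_mod_sym[OF P_commute])
    then have "?r * (P r xs * ?s) * P s xs \<approx>\<^bsub>R\<^esub> ?r * (?s * P r xs) * P s xs"
      by (intro cong_mod_rmult cong_mod_lmult)
    also have "\<dots> = a x ^ Poly_Mapping.lookup (r + s) x * (P r xs * P s xs)"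
      by (simp add: mult.assoc lookup_add power_add)
    also have "\<dots> \<approx>\<^bsub>R\<^esub> a x ^ Poly_Mapping.lookup (r + s) x * P (r + s) xs"
      by (rule cong_mod_lmult[OF Cons])
    finally show ?case
      by (simp add: P_def mult.assoc)
  qed (simp add: P_def)
  then show ?thesis
    by (simp add: oprod_def P_def)
qed

lemma xm_mult: "xm a * xm b = (xm (a + b) :: ('k::comm_ring_1, 'n) pol)"
  by (simp add: xm_def mult_single)

lemma xm_0: "xm 0 = 1"
  by (simp add: xm_def)

lemma pol_expand: "f = (\<Sum>r\<in>Poly_Mapping.keys f. psc (Poly_Mapping.lookup f r) * xm r)"
  by (simp add: xm_def psc_def mult_single poly_mapping_sum_single)

lemma Aemb_xm: "Aemb (xm r) = Dxd r 0"
  by (simp add: Aemb_def xm_def)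

lemma Dxd_0_0: "Dxd 0 0 = 1"
  by (simp add: Dxd_def)

lemma gen_GX_eq_Dxd: "gen (GX i) = Dxd (Poly_Mapping.single i 1) 0"
  by (simp only: Dxd_def oprod_0 oprod_single mult_1_right)

lemma gen_GD_eq_Dxd: "gen (GD i) = Dxd 0 (Poly_Mapping.single i 1)"
  by (simp only: Dxd_def oprod_0 oprod_single mult_1_left)

lemma gen_GA_add: "gen (GA (f + g)) \<approx>\<^bsub>smash_rel\<^esub> gen (GA f) + gen (GA g)"
proof -
  have "gen (GA (f + g)) - gen (GA f) - gen (GA g) \<in> smash_rel"
    unfolding smash_rel_def by blast
  then show ?thesis
    by (intro cong_mod_rel) (simp add: diff_diff_eq)
qed

lemma gen_GA_scale: "gen (GA (psc c * f)) \<approx>\<^bsub>smash_rel\<^esub> fsc c * gen (GA f)"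
  by (rule cong_mod_rel) (unfold smash_rel_def, blast)

lemma gen_GA_mult: "gen (GA f) * gen (GA g) \<approx>\<^bsub>smash_rel\<^esub> gen (GA (f * g))"
  by (rule cong_mod_rel) (unfold smash_rel_def, blast)

lemma gen_GA_one: "gen (GA 1) \<approx>\<^bsub>smash_rel\<^esub> 1"
  by (rule cong_mod_rel) (unfold smash_rel_def, blast)

lemma gen_GV_add: "gen (GV (xi + eta)) \<approx>\<^bsub>smash_rel\<^esub> gen (GV xi) + gen (GV eta)"
proof -
  have "gen (GV (\<lambda>i. xi i + eta i)) - gen (GV xi) - gen (GV eta) \<in> smash_rel"
    unfolding smash_rel_def by blast
  moreover have "(\<lambda>i. xi i + eta i) = xi + eta"
    by (simp add: fun_eq_iff)
  ultimately show ?thesis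
    by (intro cong_mod_rel) (simp add: diff_diff_eq)
qed

lemma gen_GV_scale: "gen (GV (vsc c eta)) \<approx>\<^bsub>smash_rel\<^esub> fsc c * gen (GV eta)"
  by (rule cong_mod_rel) (unfold smash_rel_def, blast)

lemma gen_GA_zero: "gen (GA 0) \<approx>\<^bsub>smash_rel\<^esub> 0"
  using gen_GA_add[of 0 0] by (intro cong_mod_zero_if_double) simp

lemma gen_GA_sum: "gen (GA (sum f A)) \<approx>\<^bsub>smash_rel\<^esub> (\<Sum>x\<in>A. gen (GA (f x)))"
proof (induction A rule: infinite_finite_induct)
  case (insert x A)
  have "gen (GA (sum f (insert x A))) \<approx>\<^bsub>smash_rel\<^esub> gen (GA (f x)) + gen (GA (sum f A))"
    using insert gen_GA_add by simp
  also have "\<dots> \<approx>\<^bsub>smash_rel\<^esub> gen (GA (f x)) + (\<Sum>x\<in>A. gen (GA (f x)))"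
    by (rule cong_mod_add[OF cong_mod_refl insert.IH])
  finally show ?case
    using insert by simp
qed (simp_all add: gen_GA_zero)

lemma gen_GA_expand:
  "gen (GA f) \<approx>\<^bsub>smash_rel\<^esub> (\<Sum>r\<in>Poly_Mapping.keys f. fsc (Poly_Mapping.lookup f r) * gen (GA (xm r)))"
proof -
  have "gen (GA f) = gen (GA (\<Sum>r\<in>Poly_Mapping.keys f. psc (Poly_Mapping.lookup f r) * xm r))"
    by (subst pol_expand) simp
  also have "\<dots> \<approx>\<^bsub>smash_rel\<^esub> (\<Sum>r\<in>Poly_Mapping.keys f. gen (GA (psc (Poly_Mapping.lookup f r) * xm r)))"
    by (rule gen_GA_sum)
  also have "\<dots> \<approx>\<^bsub>smash_rel\<^esub> (\<Sum>r\<in>Poly_Mapping.keys f. fsc (Poly_Mapping.lookup f r) * gen (GA (xm r)))"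
    by (intro cong_mod_sum gen_GA_scale)
  finally show ?thesis .
qed

lemma gen_GA_xm_mult: "gen (GA (xm a)) * gen (GA (xm b)) \<approx>\<^bsub>smash_rel\<^esub> gen (GA (xm (a + b)))"
  using gen_GA_mult[of "xm a" "xm b"] by (simp add: xm_mult)

lemma gen_GA_xm_0: "gen (GA (xm 0)) \<approx>\<^bsub>smash_rel\<^esub> 1"
  using gen_GA_one by (simp add: xm_0)

lemma Dxd_mult: "Dxd a 0 * Dxd b 0 \<approx>\<^bsub>tens_rel\<^esub> Dxd (a + b) 0"
proof -
  have "gen (GX i) * gen (GX j) \<approx>\<^bsub>tens_rel\<^esub> gen (GX j) * gen (GX i)" for i j
    by (rule cong_mod_rel) (unfold tens_rel_def, blast)
  from oprod_add[OF this, where r=a and s=b] show ?thesis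
    by (simp add: Dxd_def)
qed

lemma gen_GL_outside_Lplus: "eta \<notin> Lplus \<Longrightarrow> gen (GL eta) \<approx>\<^bsub>tens_rel\<^esub> 0"
  by (rule cong_mod_rel) (unfold tens_rel_def diff_zero, blast)

lemma gen_GL_add:
  assumes "xi \<in> Lplus" and "eta \<in> Lplus"
  shows "gen (GL (xi + eta)) \<approx>\<^bsub>tens_rel\<^esub> gen (GL xi) + gen (GL eta)"
proof -
  have "gen (GL (\<lambda>i. xi i + eta i)) - gen (GL xi) - gen (GL eta) \<in> tens_rel"
    using assms unfolding tens_rel_def by blast
  moreover have "(\<lambda>i. xi i + eta i) = xi + eta"
    by (simp add: fun_eq_iff)
  ultimately show ?thesis
    by (intro cong_mod_rel) (simp add: diff_diff_eq)
qed

lemma gen_GL_scale: "eta \<in> Lplus \<Longrightarrow> gen (GL (vsc c eta)) \<approx>\<^bsub>tens_rel\<^esub> fsc c * gen (GL eta)"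
  by (rule cong_mod_rel) (unfold tens_rel_def, blast)

lemma sum_fun_apply: "(sum f A) x = (\<Sum>a\<in>A. f a x)"
  by (induction A rule: infinite_finite_induct) simp_all

lemma vf_expand:
  "(eta :: ('k::comm_ring_1, 'n::finite) vf)
    = (\<Sum>p\<in>UNIV. \<Sum>k\<in>Poly_Mapping.keys (eta p). vsc (Poly_Mapping.lookup (eta p) k) (xd k p))"
proof
  fix i
  have "(\<Sum>p\<in>UNIV. \<Sum>k\<in>Poly_Mapping.keys (eta p). vsc (Poly_Mapping.lookup (eta p) k) (xd k p)) i
      = (\<Sum>p\<in>UNIV. if i = p then \<Sum>k\<in>Poly_Mapping.keys (eta p). psc (Poly_Mapping.lookup (eta p) k) * xm k else 0)"
    unfolding sum_fun_apply vsc_def xd_def by (intro sum.cong refl) simp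
  also have "\<dots> = eta i"
    by (simp flip: pol_expand)
  finally show "eta i = (\<Sum>p\<in>UNIV. \<Sum>k\<in>Poly_Mapping.keys (eta p). vsc (Poly_Mapping.lookup (eta p) k) (xd k p)) i" ..
qed

lemma sum_closed:
  assumes "P 0" and "\<And>a b. P a \<Longrightarrow> P b \<Longrightarrow> P (a + b)" and "\<And>x. x \<in> A \<Longrightarrow> P (f x)"
  shows "P (sum f A)"
  using assms(3) by (induction A rule: infinite_finite_induct) (simp_all add: assms(1,2))

lemma vf_keys_induct:
  fixes eta :: "('k::comm_ring_1, 'n::finite) vf"
  assumes "P 0" and "\<And>a b. P a \<Longrightarrow> P b \<Longrightarrow> P (a + b)"
    and "\<And>c k p. k \<in> Poly_Mapping.keys (eta p) \<Longrightarrow> P (vsc c (xd k p))"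
  shows "P eta"
  by (subst vf_expand, intro sum_closed[of P]) (simp_all add: assms)

lemma Lplus_0: "0 \<in> Lplus"
  by (simp add: Lplus_def)

lemma Lplus_add: "xi \<in> Lplus \<Longrightarrow> eta \<in> Lplus \<Longrightarrow> xi + eta \<in> Lplus"
  by (simp add: Lplus_def lookup_add)

lemma Lplus_xd: "k \<noteq> 0 \<Longrightarrow> xd k p \<in> Lplus"
  by (simp add: Lplus_def xd_def xm_def lookup_single)

lemma Lplus_vsc_xd: "k \<noteq> 0 \<Longrightarrow> vsc c (xd k p) \<in> Lplus"
  by (simp add: Lplus_def vsc_def xd_def psc_def xm_def mult_single lookup_single)

lemma Lplus_keys_nonzero: "eta \<in> Lplus \<Longrightarrow> k \<in> Poly_Mapping.keys (eta p) \<Longrightarrow> k \<noteq> 0"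
  by (auto simp: Lplus_def in_keys_iff)

lemma quot_alg_hom_fixes_vf:
  fixes G :: "('k::comm_ring_1, 'n::finite) vf \<Rightarrow> ('k, 'g) freealg"
  assumes H: "quot_alg_hom (ideal_gen S) (ideal_gen S) H"
    and M_0: "0 \<in> M" and M_add: "\<And>a b. a \<in> M \<Longrightarrow> b \<in> M \<Longrightarrow> a + b \<in> M"
    and M_basis: "\<And>c k p. k \<in> Poly_Mapping.keys (eta p) \<Longrightarrow> vsc c (xd k p) \<in> M"
    and G_add: "\<And>a b. a \<in> M \<Longrightarrow> b \<in> M \<Longrightarrow> G (a + b) \<approx>\<^bsub>S\<^esub> G a + G b"
    and G_scale: "\<And>c k p. k \<in> Poly_Mapping.keys (eta p) \<Longrightarrow> G (vsc c (xd k p)) \<approx>\<^bsub>S\<^esub> fsc c * G (xd k p)"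
    and H_basis: "\<And>k p. k \<in> Poly_Mapping.keys (eta p) \<Longrightarrow> H (G (xd k p)) \<approx>\<^bsub>S\<^esub> G (xd k p)"
  shows "H (G eta) \<approx>\<^bsub>S\<^esub> G eta"
proof -
  have "eta \<in> M \<and> H (G eta) \<approx>\<^bsub>S\<^esub> G eta"
  proof (rule vf_keys_induct[where P = "\<lambda>a. a \<in> M \<and> H (G a) \<approx>\<^bsub>S\<^esub> G a"])
    have "G 0 \<approx>\<^bsub>S\<^esub> 0"
      using G_add[OF M_0 M_0] by (intro cong_mod_zero_if_double) simp
    then show "0 \<in> M \<and> H (G 0) \<approx>\<^bsub>S\<^esub> G 0"
      by (simp add: M_0 quot_alg_hom_fixes_if_cong_zero[OF H])
  next
    fix a b
    assume a: "a \<in> M \<and> H (G a) \<approx>\<^bsub>S\<^esub> G a" and b: "b \<in> M \<and> H (G b) \<approx>\<^bsub>S\<^esub> G b"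
    have "H (G (a + b)) \<approx>\<^bsub>S\<^esub> H (G a + G b)"
      using a b by (intro quot_alg_hom_cong[OF H] G_add) simp_all
    also have "\<dots> \<approx>\<^bsub>S\<^esub> H (G a) + H (G b)"
      by (rule quot_alg_hom_add[OF H])
    also have "\<dots> \<approx>\<^bsub>S\<^esub> G a + G b"
      using a b by (intro cong_mod_add) simp_all
    also have "\<dots> \<approx>\<^bsub>S\<^esub> G (a + b)"
      using a b by (intro cong_mod_sym[OF G_add]) simp_all
    finally show "a + b \<in> M \<and> H (G (a + b)) \<approx>\<^bsub>S\<^esub> G (a + b)"
      using a b M_add by simp
  next
    fix c k p
    assume k: "k \<in> Poly_Mapping.keys (eta p)"
    have "H (G (vsc c (xd k p))) \<approx>\<^bsub>S\<^esub> H (fsc c * G (xd k p))"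
      by (rule quot_alg_hom_cong[OF H G_scale[OF k]])
    also have "\<dots> \<approx>\<^bsub>S\<^esub> fsc c * H (G (xd k p))"
      by (rule quot_alg_hom_scale[OF H])
    also have "\<dots> \<approx>\<^bsub>S\<^esub> G (vsc c (xd k p))"
      using cong_mod_lmult[OF H_basis[OF k]] cong_mod_sym[OF G_scale[OF k]] by (rule cong_mod_trans)
    finally show "vsc c (xd k p) \<in> M \<and> H (G (vsc c (xd k p))) \<approx>\<^bsub>S\<^esub> G (vsc c (xd k p))"
      using M_basis[OF k] by simp
  qed
  then show ?thesis ..
qed

section \<open>Unitriangular maps with inverse coefficient matrices\<close>

lemma triangular_inverse:
  fixes F :: "('k::comm_ring_1, 'g) freealg \<Rightarrow> ('k, 'h) freealg"
    and X :: "('n::finite \<Rightarrow>\<^sub>0 nat) \<Rightarrow> ('k, 'g) freealg"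
  assumes F: "quot_alg_hom I (ideal_gen S) F"
    and F_X: "\<And>r. F (X r) \<approx>\<^bsub>S\<^esub> A r"
    and A_add: "\<And>a b. A a * A b \<approx>\<^bsub>S\<^esub> A (a + b)"
    and A_0: "A 0 \<approx>\<^bsub>S\<^esub> 1"
    and F_e: "\<And>l. F (e l) \<approx>\<^bsub>S\<^esub> (\<Sum>j | mle j l. fsc (c l j) * A (l - j) * v j)"
    and inverse: "\<And>j. mle j k \<Longrightarrow> (\<Sum>l | mle j l \<and> mle l k. b l * c l j) = (if j = k then 1 else 0)"
  shows "F (\<Sum>l | mle l k. fsc (b l) * X (k - l) * e l) \<approx>\<^bsub>S\<^esub> v k"
proof -
  let ?K = "{l. mle l k}"
  have "F (\<Sum>l\<in>?K. fsc (b l) * X (k - l) * e l) \<approx>\<^bsub>S\<^esub> (\<Sum>l\<in>?K. fsc (b l) * F (X (k - l)) * F (e l))"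
    by (rule cong_mod_trans[OF quot_alg_hom_sum[OF F] cong_mod_sum[OF quot_alg_hom_scale_mult[OF F]]])
  also have "\<dots> \<approx>\<^bsub>S\<^esub> (\<Sum>l\<in>?K. \<Sum>j | mle j l. fsc (b l * c l j) * A (k - j) * v j)"
  proof (rule cong_mod_sum)
    fix l
    assume "l \<in> ?K"
    have "fsc (b l) * F (X (k - l)) * F (e l)
        \<approx>\<^bsub>S\<^esub> fsc (b l) * A (k - l) * (\<Sum>j | mle j l. fsc (c l j) * A (l - j) * v j)"
      by (rule cong_mod_mult[OF cong_mod_lmult[OF F_X] F_e])
    also have "\<dots> = (\<Sum>j | mle j l. fsc (b l * c l j) * (A (k - l) * A (l - j)) * v j)"
      by (simp add: sum_distrib_left fsc_mult_reassoc)
    also have "\<dots> \<approx>\<^bsub>S\<^esub> (\<Sum>j | mle j l. fsc (b l * c l j) * A (k - j) * v j)"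
    proof (intro cong_mod_sum cong_mod_rmult cong_mod_lmult)
      fix j
      assume "j \<in> {j. mle j l}"
      then show "A (k - l) * A (l - j) \<approx>\<^bsub>S\<^esub> A (k - j)"
        using A_add[of "k - l" "l - j"] mle_diff_add_diff[of j l k] \<open>l \<in> ?K\<close> by simp
    qed
    finally show "fsc (b l) * F (X (k - l)) * F (e l)
        \<approx>\<^bsub>S\<^esub> (\<Sum>j | mle j l. fsc (b l * c l j) * A (k - j) * v j)" .
  qed
  also have "\<dots> = (\<Sum>j\<in>?K. fsc (\<Sum>l | mle j l \<and> mle l k. b l * c l j) * A (k - j) * v j)"
    by (simp add: sum_mle_swap fsc_sum sum_distrib_right)
  also have "\<dots> = (\<Sum>j\<in>?K. if j = k then A 0 * v k else 0)"
    by (intro sum.cong refl) (simp add: inverse)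
  also have "\<dots> = A 0 * v k"
    by (simp add: finite_mle mle_refl)
  also have "\<dots> \<approx>\<^bsub>S\<^esub> v k"
    using cong_mod_rmult[OF A_0] by simp
  finally show ?thesis .
qed

section \<open>The maps \<phi> and \<psi>\<close>

definition tens_basis :: "('n \<Rightarrow>\<^sub>0 nat) \<Rightarrow> 'n \<Rightarrow> ('k::comm_ring_1, ('n, ('k, 'n) vf) tgen) freealg" where
  "tens_basis l p = (if l = 0 then gen (GD p) else gen (GL (xd l p)))"

locale smash_tensor_homs =
  fixes \<phi> :: "('k::comm_ring_1, (('k, 'n::{finite,linorder}) pol, ('k, 'n) vf) sgen) freealg
               \<Rightarrow> ('k, ('n, ('k, 'n) vf) tgen) freealg"
    and \<psi> :: "('k, ('n, ('k, 'n) vf) tgen) freealg \<Rightarrow> ('k, (('k, 'n) pol, ('k, 'n) vf) sgen) freealg"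
  assumes phi_hom: "quot_alg_hom (ideal_gen smash_rel) (ideal_gen tens_rel) \<phi>"
    and phi_A: "\<phi> (gen (GA f)) \<approx>\<^bsub>tens_rel\<^esub> Aemb f"
    and phi_V: "\<phi> (gen (GV (xd k p))) \<approx>\<^bsub>tens_rel\<^esub>
          Dxd k 0 * Dxd 0 (Poly_Mapping.single p 1)
          + (\<Sum>m | mle m k \<and> m \<noteq> 0. fsc (of_nat (mbinom k m)) * Dxd (k - m) 0 * gen (GL (xd m p)))"
    and psi_hom: "quot_alg_hom (ideal_gen tens_rel) (ideal_gen smash_rel) \<psi>"
    and psi_D: "\<psi> (Dxd r s) \<approx>\<^bsub>smash_rel\<^esub> gen (GA (xm r)) * oprod (\<lambda>i. gen (GV (dvec i))) s"
    and psi_L: "m \<noteq> 0 \<Longrightarrow> \<psi> (gen (GL (xd m p))) \<approx>\<^bsub>smash_rel\<^esub>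
          (\<Sum>k | mle k m. fsc ((-1) ^ msize (m - k) * of_nat (mbinom m k))
             * gen (GA (xm (m - k))) * gen (GV (xd k p)))"
begin

lemma phi_GA_xm: "\<phi> (gen (GA (xm r))) \<approx>\<^bsub>tens_rel\<^esub> Dxd r 0"
  using phi_A[of "xm r"] by (simp add: Aemb_xm)

lemma psi_Dxd: "\<psi> (Dxd r 0) \<approx>\<^bsub>smash_rel\<^esub> gen (GA (xm r))"
  using psi_D[of r 0] by simp

lemma phi_GV_xd: "\<phi> (gen (GV (xd k p))) \<approx>\<^bsub>tens_rel\<^esub>
    (\<Sum>l | mle l k. fsc (of_nat (mbinom k l)) * Dxd (k - l) 0 * tens_basis l p)"
proof -
  have "{l. mle l k} = insert 0 {l. mle l k \<and> l \<noteq> 0}"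
    by (auto simp: mle_0)
  moreover have "finite {l. mle l k \<and> l \<noteq> 0}"
    using finite_mle[of k] by (rule rev_finite_subset) auto
  ultimately have expand: "(\<Sum>l | mle l k. fsc (of_nat (mbinom k l)) * Dxd (k - l) 0 * tens_basis l p)
      = Dxd k 0 * Dxd 0 (Poly_Mapping.single p 1)
        + (\<Sum>m | mle m k \<and> m \<noteq> 0. fsc (of_nat (mbinom k m)) * Dxd (k - m) 0 * gen (GL (xd m p)))"
    by (simp add: tens_basis_def gen_GD_eq_Dxd)
  show ?thesis
    unfolding expand by (rule phi_V)
qed

lemma psi_tens_basis: "\<psi> (tens_basis l p) \<approx>\<^bsub>smash_rel\<^esub>
    (\<Sum>j | mle j l. fsc ((-1) ^ msize (l - j) * of_nat (mbinom l j)) * gen (GA (xm (l - j))) * gen (GV (xd j p)))"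
proof (cases "l = 0")
  case True
  have "\<psi> (Dxd 0 (Poly_Mapping.single p 1)) \<approx>\<^bsub>smash_rel\<^esub> gen (GA (xm 0)) * gen (GV (xd 0 p))"
    using psi_D[of 0 "Poly_Mapping.single p 1"] unfolding oprod_single dvec_def .
  then show ?thesis
    using True by (simp add: tens_basis_def gen_GD_eq_Dxd mle_0_iff)
next
  case False
  then show ?thesis
    using psi_L by (simp add: tens_basis_def)
qed

lemma psi_phi_GV_xd: "\<psi> (\<phi> (gen (GV (xd k p)))) \<approx>\<^bsub>smash_rel\<^esub> gen (GV (xd k p))"
proof -
  have "\<psi> (\<phi> (gen (GV (xd k p)))) \<approx>\<^bsub>smash_rel\<^esub>
      \<psi> (\<Sum>l | mle l k. fsc (of_nat (mbinom k l)) * Dxd (k - l) 0 * tens_basis l p)"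
    by (rule quot_alg_hom_cong[OF psi_hom phi_GV_xd])
  also have "\<dots> \<approx>\<^bsub>smash_rel\<^esub> gen (GV (xd k p))"
    by (rule triangular_inverse[OF psi_hom psi_Dxd gen_GA_xm_mult gen_GA_xm_0 psi_tens_basis mbinom_inversion])
  finally show ?thesis .
qed

lemma phi_psi_tens_basis: "\<phi> (\<psi> (tens_basis m p)) \<approx>\<^bsub>tens_rel\<^esub> tens_basis m p"
proof -
  have "\<phi> (\<psi> (tens_basis m p)) \<approx>\<^bsub>tens_rel\<^esub>
      \<phi> (\<Sum>j | mle j m. fsc ((-1) ^ msize (m - j) * of_nat (mbinom m j)) * gen (GA (xm (m - j))) * gen (GV (xd j p)))"
    by (rule quot_alg_hom_cong[OF phi_hom psi_tens_basis])
  also have "\<dots> \<approx>\<^bsub>tens_rel\<^esub> tens_basis m p"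
    by (rule triangular_inverse[OF phi_hom phi_GA_xm Dxd_mult cong_mod_eq[OF Dxd_0_0] phi_GV_xd mbinom_inversion'])
  finally show ?thesis .
qed

lemma psi_phi_hom: "quot_alg_hom (ideal_gen smash_rel) (ideal_gen smash_rel) (\<lambda>a. \<psi> (\<phi> a))"
  by (rule quot_alg_hom_comp[OF phi_hom psi_hom])

lemma phi_psi_hom: "quot_alg_hom (ideal_gen tens_rel) (ideal_gen tens_rel) (\<lambda>b. \<phi> (\<psi> b))"
  by (rule quot_alg_hom_comp[OF psi_hom phi_hom])

lemma psi_phi_GA: "\<psi> (\<phi> (gen (GA f))) \<approx>\<^bsub>smash_rel\<^esub> gen (GA f)"
proof (rule quot_alg_hom_fixes_sum[OF psi_phi_hom gen_GA_expand])
  fix r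
  show "\<psi> (\<phi> (gen (GA (xm r)))) \<approx>\<^bsub>smash_rel\<^esub> gen (GA (xm r))"
    by (rule cong_mod_trans[OF quot_alg_hom_cong[OF psi_hom phi_GA_xm] psi_Dxd])
qed

lemma psi_phi_GV: "\<psi> (\<phi> (gen (GV eta))) \<approx>\<^bsub>smash_rel\<^esub> gen (GV eta)"
  by (rule quot_alg_hom_fixes_vf[OF psi_phi_hom, where M = UNIV];
      (rule gen_GV_add gen_GV_scale psi_phi_GV_xd)?; simp)

lemma psi_phi: "\<psi> (\<phi> a) \<approx>\<^bsub>smash_rel\<^esub> a"
proof (rule quot_alg_hom_eq_id_if_fixes_gen[OF psi_phi_hom])
  fix g
  show "\<psi> (\<phi> (gen g)) \<approx>\<^bsub>smash_rel\<^esub> gen g"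
    by (cases g) (simp_all add: psi_phi_GA psi_phi_GV)
qed

lemma phi_psi_GX: "\<phi> (\<psi> (gen (GX i))) \<approx>\<^bsub>tens_rel\<^esub> gen (GX i)"
  unfolding gen_GX_eq_Dxd by (rule cong_mod_trans[OF quot_alg_hom_cong[OF phi_hom psi_Dxd] phi_GA_xm])

lemma phi_psi_GD: "\<phi> (\<psi> (gen (GD i))) \<approx>\<^bsub>tens_rel\<^esub> gen (GD i)"
  using phi_psi_tens_basis[of 0 i] by (simp add: tens_basis_def)

lemma phi_psi_GL: "\<phi> (\<psi> (gen (GL eta))) \<approx>\<^bsub>tens_rel\<^esub> gen (GL eta)"
proof (cases "eta \<in> Lplus")
  case True
  show ?thesis
  proof (rule quot_alg_hom_fixes_vf[OF phi_psi_hom, where M = Lplus])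
    fix c k p
    assume "k \<in> Poly_Mapping.keys (eta p)"
    then have "k \<noteq> 0"
      using Lplus_keys_nonzero[OF True] by blast
    then show "vsc c (xd k p) \<in> Lplus"
      and "gen (GL (vsc c (xd k p))) \<approx>\<^bsub>tens_rel\<^esub> fsc c * gen (GL (xd k p))"
      and "\<phi> (\<psi> (gen (GL (xd k p)))) \<approx>\<^bsub>tens_rel\<^esub> gen (GL (xd k p))"
      using phi_psi_tens_basis[of k p]
      by (simp_all add: Lplus_vsc_xd gen_GL_scale Lplus_xd tens_basis_def)
  qed (rule Lplus_0 Lplus_add gen_GL_add; assumption)+
next
  case False
  then show ?thesis
    by (intro quot_alg_hom_fixes_if_cong_zero[OF phi_psi_hom] gen_GL_outside_Lplus)
qed

lemma phi_psi: "\<phi> (\<psi> b) \<approx>\<^bsub>tens_rel\<^esub> b"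
proof (rule quot_alg_hom_eq_id_if_fixes_gen[OF phi_psi_hom])
  fix g
  show "\<phi> (\<psi> (gen g)) \<approx>\<^bsub>tens_rel\<^esub> gen g"
    by (cases g) (simp_all add: phi_psi_GX phi_psi_GD phi_psi_GL)
qed

end

theorem lemma3p5:
  fixes \<phi> :: "('k::{alg_closed_field, field_char_0}, (('k, 'n::{finite,linorder}) pol, ('k, 'n) vf) sgen) freealg
               \<Rightarrow> ('k, ('n, ('k, 'n) vf) tgen) freealg"
    and \<psi> :: "('k, ('n, ('k, 'n) vf) tgen) freealg \<Rightarrow> ('k, (('k, 'n) pol, ('k, 'n) vf) sgen) freealg"
  assumes phi_hom: "quot_alg_hom smash_ideal tens_ideal \<phi>"
    and phi_A: "\<And>f. \<phi> (gen (GA f)) - Aemb f \<in> tens_ideal"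
    and phi_V: "\<And>k p. \<phi> (gen (GV (xd k p))) -
          (Dxd k 0 * Dxd 0 (Poly_Mapping.single p 1)
           + (\<Sum>m\<in>{m. mle m k \<and> m \<noteq> 0}.
                fsc (of_nat (mbinom k m)) * Dxd (k - m) 0 * gen (GL (xd m p))))
        \<in> tens_ideal"
    and psi_hom: "quot_alg_hom tens_ideal smash_ideal \<psi>"
    and psi_D: "\<And>r s. \<psi> (Dxd r s) -
          gen (GA (xm r)) * oprod (\<lambda>i. gen (GV (dvec i))) s \<in> smash_ideal"
    and psi_L: "\<And>m p. m \<noteq> 0 \<Longrightarrow> \<psi> (gen (GL (xd m p))) -
          (\<Sum>k\<in>{k. mle k m}.
             fsc ((-1) ^ msize (m - k) * of_nat (mbinom m k))
               * gen (GA (xm (m - k))) * gen (GV (xd k p)))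
        \<in> smash_ideal"
  shows "(\<forall>a. \<psi> (\<phi> a) - a \<in> smash_ideal) \<and> (\<forall>b. \<phi> (\<psi> b) - b \<in> tens_ideal)"
proof -
  interpret smash_tensor_homs \<phi> \<psi>
    using assms unfolding smash_tensor_homs_def cong_mod_def smash_ideal_def tens_ideal_def by blast
  show ?thesis
    using psi_phi phi_psi unfolding cong_mod_def smash_ideal_def tens_ideal_def by blast
qed

end
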